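(* Let $n\ge2$, $v_T=[[1,\dots,n],n+1,\dots,2n-1]\in V_{n,3}$, and for $i\in[n]$ let $v_{R_i}=[[i,n+1,\dots,2n-1],1,\dots,\widehat{i},\dots,n]$. Then \[\eta(v_T)=-\Big(\varphi(v_T)+\sum_{i=1}^n(-1)^{i-1}\varphi(v_{R_i})\Big).\]
   Context: All vector spaces are over $\mathbb C$. $V_{n,3}$ is the $\mathbb C$-span of left-comb brackets $[[x_1,\dots,x_n],y_1,\dots,y_{n-1}]$ with $\{x_i\}\cup\{y_j\}=[2n-1]$, modulo antisymmetry in the $x$'s and separately in the $y$'s; it is identified with $\tilde M^{2^{n-1}1}$ (the span of column tabloids of shape $2^{n-1}1$ modulo antisymmetry within columns) by sending such a bracket to the column tabloid with first column the $x$'s and second column the $y$'s. The map $\varphi:V_{n,3}\to V_{n,3}$ is $\varphi([[x_1,\dots,x_n],y_1,\dots,y_{n-1}])=[[x_1,\dots,x_n],y_1,\dots,y_{n-1}]-\sum_{i=1}^n(-1)^{n-i}[[y_1,\dots,y_{n-1},x_i],x_1,\dots,\widehat{x_i},\dots,x_n]$. The map $\eta$ is the linear map $\eta([t])=(n-1)[t]-\sum_{j=1}^{n-1}\pi^j_{1,1}([t])$, where $\pi^{j}_{1,1}([t])$ is the sum, over all entries $x$ of the first column of $t$, of the column tabloids $[t']$ with $t'$ obtained from $t$ by swapping $x$ with the $j$-th entry of the second column. *)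

theory Defs
  imports Complex_Main
begin

text \<open>Model of V_{n,3} = tilde M^{2^{n-1}1}: a vector is a coefficient function on
  basis elements, indexed by the pair (set of first column, set of second column).
  A column tabloid with ordered columns xs, ys equals the sign of the sorting
  permutation of xs times that of ys times the basis element (sorted columns).\<close>

type_synonym vec = "(nat set \<times> nat set) \<Rightarrow> complex"

definition inversions :: "nat list \<Rightarrow> nat" where
  "inversions xs = card {(i, j). i < j \<and> j < length xs \<and> xs ! i > xs ! j}"

definition list_sign :: "nat list \<Rightarrow> complex" where
  "list_sign xs = (-1) ^ inversions xs"

definition tab :: "nat list \<Rightarrow> nat list \<Rightarrow> vec" where
  "tab xs ys = (\<lambda>S. if S = (set xs, set ys) \<and> distinct xs \<and> distinct ys
                    then list_sign xs * list_sign ys else 0)"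

definition phi_br :: "nat list \<Rightarrow> nat list \<Rightarrow> vec" where
  "phi_br xs ys = (\<lambda>S. tab xs ys S
     - (\<Sum>i = 1..length xs. (-1) ^ (length xs - i)
          * tab (ys @ [xs ! (i - 1)]) (take (i - 1) xs @ drop i xs) S))"

definition pi_br :: "nat \<Rightarrow> nat list \<Rightarrow> nat list \<Rightarrow> vec" where
  "pi_br j xs ys = (\<lambda>S. \<Sum>k = 1..length xs.
      tab (xs[k - 1 := ys ! (j - 1)]) (ys[j - 1 := xs ! (k - 1)]) S)"

definition eta_br :: "nat list \<Rightarrow> nat list \<Rightarrow> vec" where
  "eta_br xs ys = (\<lambda>S. of_nat (length xs - 1) * tab xs ys S
      - (\<Sum>j = 1..length xs - 1. pi_br j xs ys S))"

definition vT_x :: "nat \<Rightarrow> nat list" where "vT_x n = [1..<n+1]"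
definition vT_y :: "nat \<Rightarrow> nat list" where "vT_y n = [n+1..<2*n]"
definition vR_x :: "nat \<Rightarrow> nat \<Rightarrow> nat list" where "vR_x n i = i # [n+1..<2*n]"
definition vR_y :: "nat \<Rightarrow> nat \<Rightarrow> nat list" where
  "vR_y n i = filter (\<lambda>a. a \<noteq> i) [1..<n+1]"

end

theory Submission
  imports Defs
begin

text \<open>Expand every column tabloid in the basis of tabloids with increasing columns; the sign
  of a tabloid is the parity of the inversions of its two columns. Only three kinds of basis
  vectors occur: T = ([n], [n+1..2n-1]), the sorted R_i, and the n(n-1) tabloids obtained from
  T by exchanging some k \<le> n with some n + j. The rotation terms of phi(v_T) are \<plusminus>R_i
  and cancel the leading terms of (-1)^(i-1) phi(v_R_i). The first rotation term of each
  phi(v_R_i) contributes -T, and its remaining rotation terms are exactly the exchanged tabloids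
  making up the pi^j_{1,1}(v_T), with matching signs. What is left on the right-hand side is
  (n-1) T - \<Sum>_j pi^j_{1,1}(v_T) = eta(v_T).\<close>

lemma inversions_Nil [simp]: "inversions [] = 0"
  by (simp add: inversions_def)

lemma inversions_Cons:
  "inversions (a # xs) = length (filter (\<lambda>x. x < a) xs) + inversions xs"
proof -
  let ?P = "{(i, j). i < j \<and> j < length xs \<and> xs ! i > xs ! j}"
  let ?Q = "{j. j < length xs \<and> xs ! j < a}"
  have split: "{(i, j). i < j \<and> j < length (a # xs) \<and> (a # xs) ! i > (a # xs) ! j}
      = (\<lambda>j. (0, Suc j)) ` ?Q \<union> (\<lambda>(i, j). (Suc i, Suc j)) ` ?P"
  proof (rule set_eqI, clarify)
    fix i j
    show "((i, j) \<in> {(i, j). i < j \<and> j < length (a # xs) \<and> (a # xs) ! i > (a # xs) ! j}) =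
          ((i, j) \<in> (\<lambda>j. (0, Suc j)) ` ?Q \<union> (\<lambda>(i, j). (Suc i, Suc j)) ` ?P)"
      by (cases i; cases j) (auto simp: image_iff)
  qed
  have "finite ?P"
    by (rule finite_subset[of _ "{..<length xs} \<times> {..<length xs}"]) auto
  then have "inversions (a # xs) = card ((\<lambda>j. (0::nat, Suc j)) ` ?Q) + card ((\<lambda>(i, j). (Suc i, Suc j)) ` ?P)"
    unfolding inversions_def split by (intro card_Un_disjoint finite_imageI) auto
  also have "\<dots> = card ?Q + card ?P"
    by (subst card_image, force simp: inj_on_def)+ simp
  finally show ?thesis
    by (simp add: length_filter_conv_card inversions_def)
qed

lemma inversions_sorted: "sorted_wrt (<) xs \<Longrightarrow> inversions xs = 0"
  by (induction xs) (auto simp: inversions_Cons filter_empty_conv)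

lemma inversions_append_less:
  "\<forall>x\<in>set xs. \<forall>y\<in>set ys. x < y \<Longrightarrow> inversions (xs @ ys) = inversions xs + inversions ys"
  by (induction xs) (auto simp: inversions_Cons filter_empty_conv)

lemma inversions_append_greater:
  "\<forall>x\<in>set xs. \<forall>y\<in>set ys. y < x \<Longrightarrow>
    inversions (xs @ ys) = inversions xs + inversions ys + length xs * length ys"
proof (induction xs)
  case (Cons a xs)
  then have "filter (\<lambda>x. x < a) (xs @ ys) = filter (\<lambda>x. x < a) xs @ ys"
    by (simp add: filter_id_conv)
  with Cons show ?case by (simp add: inversions_Cons)
qed simp

lemma minus_one_power_eq: "even (a + b) \<Longrightarrow> (-1 :: 'a :: ring_1) ^ a = (-1) ^ b"
  by (auto simp: minus_one_power_iff)

declare upt_Suc [simp del]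

lemma upt_split_at: "a \<le> i \<Longrightarrow> i < b \<Longrightarrow> [a..<b] = [a..<i] @ i # [Suc i..<b]"
  by (metis upt_add_eq_append upt_conv_Cons le_add_diff_inverse less_imp_le_nat)

lemma upt_update: "a \<le> i \<Longrightarrow> i < b \<Longrightarrow> [a..<b][i - a := v] = [a..<i] @ v # [Suc i..<b]"
  by (simp add: upt_split_at[of a i b] list_update_append)

lemma filter_upt_neq: "a \<le> i \<Longrightarrow> i < b \<Longrightarrow> filter (\<lambda>x. x \<noteq> i) [a..<b] = [a..<i] @ [Suc i..<b]"
  by (simp add: upt_split_at[of a i b] filter_id_conv)

definition basis_vec :: "nat set \<Rightarrow> nat set \<Rightarrow> vec" where
  "basis_vec A B = (\<lambda>S. if S = (A, B) then 1 else 0)"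

lemma tab_eq_basis_vec:
  "distinct xs \<Longrightarrow> distinct ys \<Longrightarrow>
    tab xs ys S = (-1) ^ (inversions xs + inversions ys) * basis_vec (set xs) (set ys) S"
  by (simp add: tab_def basis_vec_def list_sign_def power_add)

definition basis_T :: "nat \<Rightarrow> vec" where
  "basis_T n = basis_vec {1..n} {n+1..<2*n}"

definition basis_R :: "nat \<Rightarrow> nat \<Rightarrow> vec" where
  "basis_R n i = basis_vec (insert i {n+1..<2*n}) ({1..n} - {i})"

definition basis_swap :: "nat \<Rightarrow> nat \<Rightarrow> nat \<Rightarrow> vec" where
  "basis_swap n k j = basis_vec (insert (n+j) ({1..n} - {k})) (insert k ({n+1..<2*n} - {n+j}))"

lemma vR_y_eq: "1 \<le> i \<Longrightarrow> i \<le> n \<Longrightarrow> vR_y n i = [1..<i] @ [Suc i..<Suc n]"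
  unfolding vR_y_def by (simp add: filter_upt_neq)

lemma tab_vT: "tab (vT_x n) (vT_y n) S = basis_T n S"
  by (simp add: vT_x_def vT_y_def basis_T_def tab_eq_basis_vec inversions_sorted atLeastLessThanSuc_atLeastAtMost)

lemma tab_vR:
  assumes "1 \<le> i" "i \<le> n"
  shows "tab (vR_x n i) (vR_y n i) S = basis_R n i S"
proof -
  have "inversions (i # [n+1..<2*n]) = 0" "inversions ([1..<i] @ [Suc i..<Suc n]) = 0"
    using assms by (auto intro!: inversions_sorted simp: sorted_wrt_append)
  moreover have "set ([1..<i] @ [Suc i..<Suc n]) = {1..n} - {i}"
    using assms by auto
  ultimately show ?thesis
    using assms by (simp add: vR_x_def vR_y_eq basis_R_def tab_eq_basis_vec)
qed

lemma tab_vT_swap: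
  assumes "1 \<le> k" "k \<le> n" "1 \<le> j" "j < n"
  shows "tab ((vT_x n)[k - 1 := vT_y n ! (j - 1)]) ((vT_y n)[j - 1 := vT_x n ! (k - 1)]) S
    = (-1) ^ (n - k + (j - 1)) * basis_swap n k j S"
proof -
  let ?xs = "[1..<k] @ (n + j) # [Suc k..<Suc n]"
  let ?ys = "([n+1..<n+j] @ [k]) @ [Suc (n + j)..<2*n]"
  have "(vT_x n)[k - 1 := vT_y n ! (j - 1)] = ?xs"
    using assms upt_update[of 1 k "Suc n" "n + j"] by (simp add: vT_x_def vT_y_def)
  moreover have "(vT_y n)[j - 1 := vT_x n ! (k - 1)] = ?ys"
    using assms upt_update[of "n+1" "n+j" "2*n" k] by (simp add: vT_x_def vT_y_def)
  moreover have "inversions ?xs = n - k"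
    using assms by (subst inversions_append_less) (auto simp: inversions_Cons inversions_sorted filter_True)
  moreover have "inversions ?ys = j - 1"
    using assms by (subst inversions_append_less, force, subst inversions_append_greater)
      (auto simp: inversions_sorted)
  moreover have "set ?xs = insert (n+j) ({1..n} - {k})" "set ?ys = insert k ({n+1..<2*n} - {n+j})"
    using assms by auto
  moreover have "distinct ?xs" "distinct ?ys"
    using assms by auto
  ultimately show ?thesis
    by (simp add: tab_eq_basis_vec basis_swap_def)
qed

lemma tab_vT_rotate:
  assumes "1 \<le> i" "i \<le> n"
  shows "tab (vT_y n @ [vT_x n ! (i - 1)]) (take (i - 1) (vT_x n) @ drop i (vT_x n)) S
    = (-1) ^ (n - 1) * basis_R n i S"
proof -
  let ?ys = "[1..<i] @ [Suc i..<Suc n]"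
  have "vT_x n ! (i - 1) = i" "take (i - 1) (vT_x n) @ drop i (vT_x n) = ?ys"
    using assms by (simp_all add: vT_x_def)
  moreover have "inversions ([n+1..<2*n] @ [i]) = n - 1" "inversions ?ys = 0"
    using assms by (auto simp: inversions_append_greater inversions_sorted sorted_wrt_append)
  moreover have "set ?ys = {1..n} - {i}"
    using assms by auto
  ultimately show ?thesis
    using assms by (simp add: vT_y_def basis_R_def tab_eq_basis_vec)
qed

lemma tab_vR_rotate_first:
  assumes "1 \<le> i" "i \<le> n"
  shows "tab (vR_y n i @ [vR_x n i ! 0]) (take 0 (vR_x n i) @ drop 1 (vR_x n i)) S
    = (-1) ^ (n - i) * basis_T n S"
proof -
  let ?xs = "[1..<i] @ [Suc i..<Suc n] @ [i]"
  have "vR_y n i @ [vR_x n i ! 0] = ?xs" "take 0 (vR_x n i) @ drop 1 (vR_x n i) = [n+1..<2*n]"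
    using assms by (simp_all add: vR_y_eq vR_x_def)
  moreover have "inversions ?xs = n - i"
    using assms by (subst inversions_append_less, force, subst inversions_append_greater)
      (auto simp: inversions_sorted)
  moreover have "set ?xs = {1..n}"
    using assms by auto
  moreover have "distinct ?xs"
    using assms by auto
  ultimately show ?thesis
    by (simp add: basis_T_def tab_eq_basis_vec inversions_sorted)
qed

lemma tab_vR_rotate:
  assumes "1 \<le> i" "i \<le> n" "2 \<le> p" "p \<le> n"
  shows "tab (vR_y n i @ [vR_x n i ! (p - 1)]) (take (p - 1) (vR_x n i) @ drop p (vR_x n i)) S
    = basis_swap n i (p - 1) S"
proof -
  let ?xs = "[1..<i] @ [Suc i..<Suc n] @ [n + p - 1]"
  let ?ys = "i # [n+1..<n + p - 1] @ [n + p..<2*n]"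
  have sorted: "sorted_wrt (<) ?xs" "sorted_wrt (<) ?ys"
    using assms by (auto simp: sorted_wrt_append; linarith)+
  have "vR_y n i @ [vR_x n i ! (p - 1)] = ?xs" "take (p - 1) (vR_x n i) @ drop p (vR_x n i) = ?ys"
    using assms by (auto simp: vR_y_eq vR_x_def take_Cons' drop_Cons' Suc_diff_Suc)
  moreover have "inversions ?xs = 0" "inversions ?ys = 0"
    using sorted by (simp_all only: inversions_sorted)
  moreover have "set ?xs = insert (n + (p - 1)) ({1..n} - {i})"
    "set ?ys = insert i ({n+1..<2*n} - {n + (p - 1)})"
    using assms by auto
  moreover have "distinct ?xs" "distinct ?ys"
    using assms by auto
  ultimately show ?thesis
    by (simp add: basis_swap_def tab_eq_basis_vec)
qed

lemma length_vT_x [simp]: "length (vT_x n) = n"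
  by (simp add: vT_x_def)

lemma length_vR_x [simp]: "1 \<le> n \<Longrightarrow> length (vR_x n i) = n"
  by (simp add: vR_x_def)

lemma eta_vT:
  "eta_br (vT_x n) (vT_y n) S = of_nat (n - 1) * basis_T n S
     - (\<Sum>j = 1..n - 1. \<Sum>k = 1..n. (-1) ^ (n - k + (j - 1)) * basis_swap n k j S)"
  unfolding eta_br_def pi_br_def length_vT_x tab_vT
  by (intro arg_cong2[where f = "(-)"] refl sum.cong tab_vT_swap) auto

lemma phi_vT:
  "phi_br (vT_x n) (vT_y n) S = basis_T n S - (\<Sum>i = 1..n. (-1) ^ (i - 1) * basis_R n i S)"
proof -
  have "(-1) ^ (n - i) * tab (vT_y n @ [vT_x n ! (i - 1)]) (take (i - 1) (vT_x n) @ drop i (vT_x n)) S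
      = (-1) ^ (i - 1) * basis_R n i S"
    if "i \<in> {1..n}" for i
  proof -
    have i: "1 \<le> i" "i \<le> n"
      using that by auto
    have "(-1) ^ (n - i) * (-1) ^ (n - 1) = ((-1) ^ (i - 1) :: complex)"
      unfolding power_add[symmetric] using i by (intro minus_one_power_eq) auto
    then show ?thesis
      unfolding tab_vT_rotate[OF i] mult.assoc[symmetric] by simp
  qed
  then show ?thesis
    unfolding phi_br_def length_vT_x tab_vT by (metis (no_types, lifting) sum.cong)
qed

lemma phi_vR_rotations:
  assumes "1 \<le> i" "i \<le> n"
  shows "(\<Sum>p = 1..n. (-1) ^ (n - p)
            * tab (vR_y n i @ [vR_x n i ! (p - 1)]) (take (p - 1) (vR_x n i) @ drop p (vR_x n i)) S)
    = (-1) ^ (n - 1) * ((-1) ^ (n - i) * basis_T n S)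
      + (\<Sum>m = 1..n - 1. (-1) ^ (n - Suc m) * basis_swap n i m S)"
proof -
  obtain q where q: "n = Suc q"
    using assms by (cases n) auto
  have "(\<Sum>p = 1..n. (-1) ^ (n - p)
            * tab (vR_y n i @ [vR_x n i ! (p - 1)]) (take (p - 1) (vR_x n i) @ drop p (vR_x n i)) S)
    = (-1) ^ (n - 1) * tab (vR_y n i @ [vR_x n i ! 0]) (take 0 (vR_x n i) @ drop 1 (vR_x n i)) S
      + (\<Sum>m = 1..q. (-1) ^ (n - Suc m)
            * tab (vR_y n i @ [vR_x n i ! m]) (take m (vR_x n i) @ drop (Suc m) (vR_x n i)) S)"
    unfolding q by (subst sum.atLeast_Suc_atMost, simp, subst sum.shift_bounds_cl_Suc_ivl) simp
  also have "\<dots> = (-1) ^ (n - 1) * ((-1) ^ (n - i) * basis_T n S)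
      + (\<Sum>m = 1..n - 1. (-1) ^ (n - Suc m) * basis_swap n i m S)"
    using tab_vR_rotate_first[OF assms] tab_vR_rotate[OF assms, of "Suc m" for m] q
    by (auto intro!: sum.cong)
  finally show ?thesis .
qed

lemma signed_phi_vR:
  assumes "1 \<le> i" "i \<le> n"
  shows "(-1) ^ (i - 1) * phi_br (vR_x n i) (vR_y n i) S
    = (-1) ^ (i - 1) * basis_R n i S - basis_T n S
      + (\<Sum>m = 1..n - 1. (-1) ^ (n - i + (m - 1)) * basis_swap n i m S)"
proof -
  have "(-1) ^ (i - 1) * ((-1) ^ (n - 1) * (-1) ^ (n - i)) = ((-1) ^ 0 :: complex)"
    unfolding power_add[symmetric] using assms by (intro minus_one_power_eq) auto
  then have sign_T: "(-1) ^ (i - 1) * ((-1) ^ (n - 1) * (-1) ^ (n - i)) = (1 :: complex)"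
    by simp
  have sign_swaps: "(\<Sum>m = 1..n - 1. (-1) ^ (i - 1) * (-1) ^ (n - Suc m) * basis_swap n i m S)
      = - (\<Sum>m = 1..n - 1. (-1) ^ (n - i + (m - 1)) * basis_swap n i m S)"
    unfolding sum_negf[symmetric]
  proof (intro sum.cong refl)
    fix m
    assume "m \<in> {1..n - 1}"
    then have "(-1) ^ (i - 1) * (-1) ^ (n - Suc m) = ((-1) ^ Suc (n - i + (m - 1)) :: complex)"
      unfolding power_add[symmetric] using assms by (intro minus_one_power_eq) auto
    then show "(-1) ^ (i - 1) * (-1) ^ (n - Suc m) * basis_swap n i m S
        = - ((-1) ^ (n - i + (m - 1)) * basis_swap n i m S)"
      by simp
  qed
  have "phi_br (vR_x n i) (vR_y n i) S = basis_R n i S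
      - ((-1) ^ (n - 1) * ((-1) ^ (n - i) * basis_T n S)
         + (\<Sum>m = 1..n - 1. (-1) ^ (n - Suc m) * basis_swap n i m S))"
    unfolding phi_br_def length_vR_x[OF order_trans[OF assms]] tab_vR[OF assms]
      phi_vR_rotations[OF assms] ..
  then have "(-1) ^ (i - 1) * phi_br (vR_x n i) (vR_y n i) S
      = (-1) ^ (i - 1) * basis_R n i S - ((-1) ^ (i - 1) * ((-1) ^ (n - 1) * (-1) ^ (n - i))) * basis_T n S
        - (\<Sum>m = 1..n - 1. (-1) ^ (i - 1) * (-1) ^ (n - Suc m) * basis_swap n i m S)"
    by (simp add: right_diff_distrib distrib_left sum_distrib_left mult.assoc diff_diff_eq)
  also have "\<dots> = (-1) ^ (i - 1) * basis_R n i S - basis_T n S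
      + (\<Sum>m = 1..n - 1. (-1) ^ (n - i + (m - 1)) * basis_swap n i m S)"
    unfolding sign_T sign_swaps by simp
  finally show ?thesis .
qed

lemma sum_signed_phi_vR:
  assumes "1 \<le> n"
  shows "(\<Sum>i = 1..n. (-1) ^ (i - 1) * phi_br (vR_x n i) (vR_y n i) S)
    = (\<Sum>i = 1..n. (-1) ^ (i - 1) * basis_R n i S) - of_nat n * basis_T n S
      + (\<Sum>j = 1..n - 1. \<Sum>k = 1..n. (-1) ^ (n - k + (j - 1)) * basis_swap n k j S)"
proof -
  have "(\<Sum>i = 1..n. (-1) ^ (i - 1) * phi_br (vR_x n i) (vR_y n i) S)
      = (\<Sum>i = 1..n. (-1) ^ (i - 1) * basis_R n i S - basis_T n S
          + (\<Sum>j = 1..n - 1. (-1) ^ (n - i + (j - 1)) * basis_swap n i j S))"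
    by (intro sum.cong refl signed_phi_vR) auto
  also have "\<dots> = (\<Sum>i = 1..n. (-1) ^ (i - 1) * basis_R n i S) - of_nat n * basis_T n S
      + (\<Sum>i = 1..n. \<Sum>j = 1..n - 1. (-1) ^ (n - i + (j - 1)) * basis_swap n i j S)"
    by (simp add: sum.distrib sum_subtractf)
  also have "(\<Sum>i = 1..n. \<Sum>j = 1..n - 1. (-1) ^ (n - i + (j - 1)) * basis_swap n i j S)
      = (\<Sum>j = 1..n - 1. \<Sum>k = 1..n. (-1) ^ (n - k + (j - 1)) * basis_swap n k j S)"
    by (rule sum.swap)
  finally show ?thesis .
qed

theorem mainTheorem7:
  fixes n :: nat
  assumes "n \<ge> 2"
  shows "eta_br (vT_x n) (vT_y n) =
    (\<lambda>S. - (phi_br (vT_x n) (vT_y n) S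
       + (\<Sum>i = 1..n. (-1) ^ (i - 1) * phi_br (vR_x n i) (vR_y n i) S)))"
proof
  fix S
  have "(of_nat (n - 1) :: complex) = of_nat n - 1"
    using assms by (simp add: of_nat_diff)
  with assms show "eta_br (vT_x n) (vT_y n) S = - (phi_br (vT_x n) (vT_y n) S
       + (\<Sum>i = 1..n. (-1) ^ (i - 1) * phi_br (vR_x n i) (vR_y n i) S))"
    unfolding eta_vT phi_vT sum_signed_phi_vR[OF order_trans[OF one_le_numeral assms]]
    by (simp add: algebra_simps)
qed

end
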